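(* Let $G$ be a finite connected undirected weighted graph, unknown to the agents, with edge weights $w_e>0$ and $L=\sum_{e}w_e$. Two agents starting at the same node and both executing navigation table $T_{\mathrm{explo}}$ (described in the context) in the asynchronous model perform collective exploration of $G$ (every edge is traversed) while paying a total cost of at most $2L$, where traversing edge $e$ costs $w_e$.
   Context: Model. A passage (port) is an endpoint of an edge at one of its nodes. Each passage carries one marker; initially all passages are unmarked ($\emptyset$). The graph is unlabelled; an agent sees only the markers at its current node and remembers only the passage by which it arrived. A move of an agent at $u$: choose a passage at $u$ (or stop), possibly change its marker, traverse the edge to $v$, read the markers at $v$, possibly change the marker of the arrival passage. In the asynchronous model an adversary chooses, at each round, which agent performs a whole move. Navigation tables: ordered rows $(p_u,p_u',p_v,p_v')$; the agent takes the first row such that some passage at $u$ has marker $p_u$ (rows with equal $p_u$ are distinguished after arrival by the $p_v$ condition), sets that passage's marker to $p_u'$, traverses it, and sets the arrival passage's marker to $p_v'$; dash means any/unchanged; if no row applies the agent stops. A node is "discovered" if visited before. Table $T_{\mathrm{explo}}$ (priority order): (1) B, D, -, D; (2) $\emptyset$, E, E (arrival passage marked E), D; (3) $\emptyset$, E, $v$ discovered, B; (4) $\emptyset$, E, $v$ undiscovered, F; (5) F, D, -, D; (6) E, D, -, D. *)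

theory Defs
  imports Complex_Main
begin

datatype marker = Marker_Empty | Marker_B | Marker_D | Marker_E | Marker_F

text \<open>A passage (port) at node u of edge {u,v} is the pair (u,v); its opposite passage is (v,u).
  The node names are never used by the agents: the choice among passages carrying
  a given marker is arbitrary (nondeterministic, i.e. adversarial).\<close>

definition simple_graph :: "'v set \<Rightarrow> 'v set set \<Rightarrow> bool" where
  "simple_graph V E \<longleftrightarrow> finite V \<and>
     E \<subseteq> {{u, v} | u v. u \<in> V \<and> v \<in> V \<and> u \<noteq> v}"

definition adj :: "'v set set \<Rightarrow> ('v \<times> 'v) set" where
  "adj E = {(u, v). {u, v} \<in> E}"

definition connected_graph :: "'v set \<Rightarrow> 'v set set \<Rightarrow> bool" where
  "connected_graph V E \<longleftrightarrow> (\<forall>u\<in>V. \<forall>v\<in>V. (u, v) \<in> (adj E)\<^sup>*)"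

text \<open>Global configuration: markers of all passages, positions of the two agents
  (agents indexed by bool), the set of discovered (= already visited) nodes, the total
  cost paid so far and the set of edges traversed so far.\<close>
record 'v cfg =
  cfg_markers :: "'v \<times> 'v \<Rightarrow> marker"
  cfg_pos :: "bool \<Rightarrow> 'v"
  cfg_visited :: "'v set"
  cfg_cost :: real
  cfg_trav :: "'v set set"

definition init_cfg :: "'v \<Rightarrow> 'v cfg" where
  "init_cfg s = \<lparr> cfg_markers = (\<lambda>_. Marker_Empty), cfg_pos = (\<lambda>_. s),
                  cfg_visited = {s}, cfg_cost = 0, cfg_trav = {} \<rparr>"

definition has_marker :: "'v set set \<Rightarrow> 'v cfg \<Rightarrow> 'v \<Rightarrow> marker \<Rightarrow> bool" where
  "has_marker E c u m \<longleftrightarrow> (\<exists>v. {u, v} \<in> E \<and> cfg_markers c (u, v) = m)"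

definition traverse ::
  "('v set \<Rightarrow> real) \<Rightarrow> 'v cfg \<Rightarrow> bool \<Rightarrow> 'v \<Rightarrow> 'v \<Rightarrow> ('v \<times> 'v \<Rightarrow> marker) \<Rightarrow> 'v cfg" where
  "traverse w c a u v mk' =
     c\<lparr> cfg_markers := mk', cfg_pos := (cfg_pos c)(a := v),
        cfg_visited := insert v (cfg_visited c),
        cfg_cost := cfg_cost c + w {u, v},
        cfg_trav := insert {u, v} (cfg_trav c) \<rparr>"

text \<open>One whole move of agent a executing table T_explo (rows in priority order):
  (1) B, D, -, D; (2) Empty, E, E, D; (3) Empty, E, v discovered, B;
  (4) Empty, E, v undiscovered, F; (5) F, D, -, D; (6) E, D, -, D.\<close>
inductive explo_step ::
  "'v set set \<Rightarrow> ('v set \<Rightarrow> real) \<Rightarrow> bool \<Rightarrow> 'v cfg \<Rightarrow> 'v cfg \<Rightarrow> bool"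
  for E w where
  row1: "\<lbrakk> u = cfg_pos c a; {u, v} \<in> E; cfg_markers c (u, v) = Marker_B \<rbrakk> \<Longrightarrow>
     explo_step E w a c
       (traverse w c a u v ((cfg_markers c)((u, v) := Marker_D, (v, u) := Marker_D)))"
| row234: "\<lbrakk> u = cfg_pos c a; \<not> has_marker E c u Marker_B; {u, v} \<in> E;
      cfg_markers c (u, v) = Marker_Empty;
      mk1 = (cfg_markers c)((u, v) := Marker_E);
      arr = (if mk1 (v, u) = Marker_E then Marker_D
             else if v \<in> cfg_visited c then Marker_B else Marker_F) \<rbrakk> \<Longrightarrow>
     explo_step E w a c (traverse w c a u v (mk1((v, u) := arr)))"
| row5: "\<lbrakk> u = cfg_pos c a; \<not> has_marker E c u Marker_B; \<not> has_marker E c u Marker_Empty;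
      {u, v} \<in> E; cfg_markers c (u, v) = Marker_F \<rbrakk> \<Longrightarrow>
     explo_step E w a c
       (traverse w c a u v ((cfg_markers c)((u, v) := Marker_D, (v, u) := Marker_D)))"
| row6: "\<lbrakk> u = cfg_pos c a; \<not> has_marker E c u Marker_B; \<not> has_marker E c u Marker_Empty;
      \<not> has_marker E c u Marker_F; {u, v} \<in> E; cfg_markers c (u, v) = Marker_E \<rbrakk> \<Longrightarrow>
     explo_step E w a c
       (traverse w c a u v ((cfg_markers c)((u, v) := Marker_D, (v, u) := Marker_D)))"

text \<open>Asynchronous model: at each round the adversary picks an agent that performs a whole move.\<close>
definition async_step :: "'v set set \<Rightarrow> ('v set \<Rightarrow> real) \<Rightarrow> 'v cfg \<Rightarrow> 'v cfg \<Rightarrow> bool" where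
  "async_step E w c c' \<longleftrightarrow> (\<exists>a. explo_step E w a c c')"

end

theory Submission
  imports Defs
begin

text \<open>
  Count a passage as 1 if it is marked E or D and as 0 otherwise. Every move raises this count
  on the traversed edge by exactly one, so the cost paid so far is the weighted count, which is
  at most twice the total weight.

  For exploration, the F passages point from each node discovered through them to its parent and
  form a forest. Every visited node that still has an unmarked or an F passage has a descendant
  in this forest where some agent is free, or to which an agent is bound to return through a
  B passage. When no agent can move, every agent sees only D passages; then there are no
  B passages and no such nodes, so all passages at visited nodes are D, and by connectivity
  every node is visited and every edge has been traversed.
\<close>

lemma fun_upd2_other: "p \<noteq> (u, v) \<Longrightarrow> p \<noteq> (v, u) \<Longrightarrow> (m((u, v) := X, (v, u) := Y)) p = m p"
  by simp

lemma traverse_sel: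
  "cfg_markers (traverse w c a u v mk') = mk'"
  "cfg_pos (traverse w c a u v mk') = (cfg_pos c)(a := v)"
  "cfg_visited (traverse w c a u v mk') = insert v (cfg_visited c)"
  "cfg_cost (traverse w c a u v mk') = cfg_cost c + w {u, v}"
  "cfg_trav (traverse w c a u v mk') = insert {u, v} (cfg_trav c)"
  by (simp_all add: traverse_def)

lemma rtrancl_Diff_cases:
  assumes "(x, y) \<in> R\<^sup>*"
  shows "(x, y) \<in> (R - S)\<^sup>* \<or> (\<exists>p\<in>Domain S. (x, p) \<in> (R - S)\<^sup>*)"
  using assms
proof (induction rule: rtrancl_induct)
  case (step y z)
  show ?case
  proof (cases "(y, z) \<in> S")
    case True
    then have "y \<in> Domain S" by blast
    then show ?thesis using step.IH by blast
  next
    case False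
    then have yz: "(y, z) \<in> R - S" using step.hyps(2) by blast
    from step.IH show ?thesis
    proof
      assume "(x, y) \<in> (R - S)\<^sup>*"
      then show ?thesis using yz by (simp add: rtrancl_into_rtrancl)
    qed simp
  qed
qed simp

lemma simple_graph_edgeD:
  assumes "simple_graph V E" "{x, y} \<in> E"
  shows "x \<in> V" "y \<in> V" "x \<noteq> y"
  using assms unfolding simple_graph_def by (auto simp: doubleton_eq_iff)

lemma simple_graph_finite_edges:
  assumes "simple_graph V E"
  shows "finite E"
proof -
  have "finite V" "E \<subseteq> Pow V" using assms unfolding simple_graph_def by blast+
  then show ?thesis by (meson finite_Pow_iff finite_subset)
qed

lemma simple_graph_finite_adj:
  assumes "simple_graph V E"
  shows "finite (adj E)"
proof -
  have "adj E \<subseteq> V \<times> V" using simple_graph_edgeD[OF assms] unfolding adj_def by auto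
  moreover have "finite V" using assms unfolding simple_graph_def by blast
  ultimately show ?thesis by (meson finite_SigmaI finite_subset)
qed

lemma sum_adj_eq_twice_sum_edges:
  fixes f :: "'v set \<Rightarrow> 'b::semiring_1"
  assumes G: "simple_graph V E"
  shows "(\<Sum>p\<in>adj E. f {fst p, snd p}) = 2 * (\<Sum>e\<in>E. f e)"
proof -
  have img: "(\<lambda>p. {fst p, snd p}) ` adj E \<subseteq> E" unfolding adj_def by auto
  have "(\<Sum>p\<in>adj E. f {fst p, snd p}) =
        (\<Sum>e\<in>E. \<Sum>p\<in>{p \<in> adj E. {fst p, snd p} = e}. f {fst p, snd p})"
    by (rule sum.group[symmetric, OF simple_graph_finite_adj[OF G] simple_graph_finite_edges[OF G] img])
  also have "\<dots> = (\<Sum>e\<in>E. 2 * f e)"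
  proof (rule sum.cong[OF refl])
    fix e assume "e \<in> E"
    then obtain x y where e: "e = {x, y}" "x \<noteq> y"
      using G unfolding simple_graph_def by blast
    then have "{p \<in> adj E. {fst p, snd p} = e} = {(x, y), (y, x)}"
      using \<open>e \<in> E\<close> unfolding adj_def by (auto simp: doubleton_eq_iff insert_commute)
    then show "(\<Sum>p\<in>{p \<in> adj E. {fst p, snd p} = e}. f {fst p, snd p}) = 2 * f e"
      using e by (simp add: insert_commute mult_2)
  qed
  finally show ?thesis by (simp add: sum_distrib_left)
qed

section \<open>The cost potential\<close>

definition marker_weight :: "marker \<Rightarrow> real" where
  "marker_weight M = (if M = Marker_E \<or> M = Marker_D then 1 else 0)"

definition potential :: "'v set set \<Rightarrow> ('v set \<Rightarrow> real) \<Rightarrow> ('v \<times> 'v \<Rightarrow> marker) \<Rightarrow> real" where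
  "potential E w m = (\<Sum>p\<in>adj E. w {fst p, snd p} * marker_weight (m p))"

lemma potential_update:
  assumes G: "simple_graph V E" and e: "{u, v} \<in> E"
  shows "potential E w (m((u, v) := X, (v, u) := Y)) =
         potential E w m + w {u, v} * (marker_weight X + marker_weight Y
           - marker_weight (m (u, v)) - marker_weight (m (v, u)))"
proof -
  let ?S = "{(u, v), (v, u)}"
  let ?g = "\<lambda>m p. w {fst p, snd p} * marker_weight (m p)"
  have uv: "u \<noteq> v" using simple_graph_edgeD[OF G e] by blast
  have S: "?S \<subseteq> adj E" using e unfolding adj_def by (auto simp: insert_commute)
  have split: "potential E w m' = sum (?g m') (adj E - ?S) + sum (?g m') ?S" for m'
    unfolding potential_def using sum.subset_diff[OF S simple_graph_finite_adj[OF G]] .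
  have "sum (?g (m((u, v) := X, (v, u) := Y))) (adj E - ?S) = sum (?g m) (adj E - ?S)"
    by (rule sum.cong) auto
  then show ?thesis
    using uv by (simp add: split insert_commute algebra_simps)
qed

lemma potential_le:
  assumes G: "simple_graph V E" and w: "\<forall>e\<in>E. 0 \<le> w e"
  shows "potential E w m \<le> 2 * (\<Sum>e\<in>E. w e)"
proof -
  have "potential E w m \<le> (\<Sum>p\<in>adj E. w {fst p, snd p})"
    unfolding potential_def
  proof (rule sum_mono)
    fix p assume "p \<in> adj E"
    then have "0 \<le> w {fst p, snd p}" using w unfolding adj_def by auto
    then show "w {fst p, snd p} * marker_weight (m p) \<le> w {fst p, snd p}"
      by (simp add: marker_weight_def)
  qed
  also have "\<dots> = 2 * (\<Sum>e\<in>E. w e)" by (rule sum_adj_eq_twice_sum_edges[OF G])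
  finally show ?thesis .
qed

section \<open>Local marker invariants\<close>

definition compatible_markers :: "marker \<Rightarrow> marker \<Rightarrow> bool" where
  "compatible_markers X Y \<longleftrightarrow>
     (X, Y) \<in> {(Marker_Empty, Marker_Empty), (Marker_E, Marker_B), (Marker_B, Marker_E),
               (Marker_E, Marker_F), (Marker_F, Marker_E), (Marker_D, Marker_D)}"

definition markers_consistent :: "'v set set \<Rightarrow> ('v \<times> 'v \<Rightarrow> marker) \<Rightarrow> bool" where
  "markers_consistent E m \<longleftrightarrow> (\<forall>u v. {u, v} \<in> E \<longrightarrow> compatible_markers (m (u, v)) (m (v, u)))"

lemma compatible_markers_sym: "compatible_markers X Y \<Longrightarrow> compatible_markers Y X"
  by (auto simp: compatible_markers_def)

lemma markers_consistent_update:
  assumes cons: "markers_consistent E m" and XY: "compatible_markers X Y" and uv: "u \<noteq> v"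
  shows "markers_consistent E (m((u, v) := X, (v, u) := Y))"
  unfolding markers_consistent_def
proof (intro allI impI)
  fix x y assume xy: "{x, y} \<in> E"
  let ?m' = "m((u, v) := X, (v, u) := Y)"
  consider "(x, y) = (u, v)" | "(x, y) = (v, u)" | "(x, y) \<noteq> (u, v)" "(x, y) \<noteq> (v, u)" by blast
  then show "compatible_markers (?m' (x, y)) (?m' (y, x))"
  proof cases
    case 1
    then have "x = u" "y = v" by simp_all
    then show ?thesis using XY uv by simp
  next
    case 2
    then have "x = v" "y = u" by simp_all
    then show ?thesis using compatible_markers_sym[OF XY] uv by simp
  next
    case 3
    then have "?m' (x, y) = m (x, y)" by (rule fun_upd2_other)
    moreover have "?m' (y, x) = m (y, x)" using 3 by (intro fun_upd2_other) auto
    ultimately show ?thesis using cons xy unfolding markers_consistent_def by simp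
  qed
qed

definition agents_at :: "('a::finite \<Rightarrow> 'v) \<Rightarrow> 'v \<Rightarrow> nat" where
  "agents_at pos z = card {a. pos a = z}"

lemma agents_at_eq_0_iff: "agents_at pos z = 0 \<longleftrightarrow> (\<forall>a. pos a \<noteq> z)"
  unfolding agents_at_def by auto

lemma agents_at_move_other:
  assumes "pos a = u" "z \<noteq> u" "z \<noteq> v"
  shows "agents_at (pos(a := v)) z = agents_at pos z"
proof -
  have "{b. (pos(a := v)) b = z} = {b. pos b = z}" using assms by auto
  then show ?thesis unfolding agents_at_def by simp
qed

lemma agents_at_move:
  fixes pos :: "'a::finite \<Rightarrow> 'v"
  assumes "pos a = u" "u \<noteq> v"
  shows "agents_at (pos(a := v)) u + 1 = agents_at pos u"
    and "agents_at (pos(a := v)) v = agents_at pos v + 1"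
proof -
  have "{b. (pos(a := v)) b = u} = {b. pos b = u} - {a}" "a \<in> {b. pos b = u}"
    using assms by auto
  then show "agents_at (pos(a := v)) u + 1 = agents_at pos u"
    unfolding agents_at_def by (metis card_Suc_Diff1 finite Suc_eq_plus1)
  have "{b. (pos(a := v)) b = v} = insert a {b. pos b = v}" "a \<notin> {b. pos b = v}"
    using assms by auto
  then show "agents_at (pos(a := v)) v = agents_at pos v + 1"
    unfolding agents_at_def by simp
qed

definition return_ports :: "'v set set \<Rightarrow> ('v \<times> 'v \<Rightarrow> marker) \<Rightarrow> 'v \<Rightarrow> 'v set" where
  "return_ports E m z = {y. {z, y} \<in> E \<and> m (z, y) = Marker_B}"

text \<open>A B passage at z is left by an agent that reached the already discovered node z;
  that agent stays at z until it leaves through this passage.\<close>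

definition returns_bounded :: "'v set set \<Rightarrow> ('v \<times> 'v \<Rightarrow> marker) \<Rightarrow> ('a::finite \<Rightarrow> 'v) \<Rightarrow> bool" where
  "returns_bounded E m pos \<longleftrightarrow> (\<forall>z. card (return_ports E m z) \<le> agents_at pos z)"

lemma finite_return_ports:
  assumes "finite E"
  shows "finite (return_ports E m z)"
proof -
  have "inj (\<lambda>y. {z, y})" by (auto intro!: injI simp: doubleton_eq_iff)
  then have "finite ((\<lambda>y. {z, y}) -` E)" by (rule finite_vimageI[OF assms])
  moreover have "return_ports E m z \<subseteq> (\<lambda>y. {z, y}) -` E" unfolding return_ports_def by blast
  ultimately show ?thesis by (rule finite_subset[rotated])
qed

lemma return_ports_update_other:
  "z \<noteq> u \<Longrightarrow> z \<noteq> v \<Longrightarrow> return_ports E (m((u, v) := X, (v, u) := Y)) z = return_ports E m z"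
  unfolding return_ports_def by auto

lemma return_ports_update_source:
  "u \<noteq> v \<Longrightarrow> X \<noteq> Marker_B \<Longrightarrow>
     return_ports E (m((u, v) := X, (v, u) := Y)) u = return_ports E m u - {v}"
  unfolding return_ports_def by auto

lemma return_ports_update_target:
  "u \<noteq> v \<Longrightarrow> return_ports E (m((u, v) := X, (v, u) := Y)) v =
     return_ports E m v - {u} \<union> (if Y = Marker_B \<and> {v, u} \<in> E then {u} else {})"
  unfolding return_ports_def by auto

lemma returns_bounded_move:
  assumes fin: "finite E" and uv: "u \<noteq> v" and pos: "pos a = u" and X: "X \<noteq> Marker_B"
    and ports: "return_ports E m u = {} \<or> v \<in> return_ports E m u"
    and bounded: "returns_bounded E m pos"
  shows "returns_bounded E (m((u, v) := X, (v, u) := Y)) (pos(a := v))"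
  unfolding returns_bounded_def
proof
  fix z
  let ?m' = "m((u, v) := X, (v, u) := Y)"
  have le: "card (return_ports E m z) \<le> agents_at pos z" using bounded unfolding returns_bounded_def ..
  consider "z = u" | "z = v" | "z \<noteq> u" "z \<noteq> v" by blast
  then show "card (return_ports E ?m' z) \<le> agents_at (pos(a := v)) z"
  proof cases
    case 1
    have "card (return_ports E ?m' u) + 1 \<le> card (return_ports E m u) \<or> return_ports E ?m' u = {}"
      using ports return_ports_update_source[OF uv X] card_Suc_Diff1[OF finite_return_ports[OF fin]]
      by fastforce
    then show ?thesis using 1 le agents_at_move(1)[where pos = pos, OF pos uv] by auto
  next
    case 2
    have "return_ports E ?m' v \<subseteq> insert u (return_ports E m v)"
      using return_ports_update_target[OF uv] by auto
    then have "card (return_ports E ?m' v) \<le> card (insert u (return_ports E m v))"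
      using finite_return_ports[OF fin] by (simp add: card_mono)
    also have "\<dots> \<le> card (return_ports E m v) + 1"
      using finite_return_ports[OF fin] by (simp add: card_insert_if)
    finally have "card (return_ports E ?m' v) \<le> card (return_ports E m v) + 1" .
    then show ?thesis using 2 le agents_at_move(2)[where pos = pos, OF pos uv] by simp
  next
    case 3
    then have "return_ports E ?m' z = return_ports E m z" "agents_at (pos(a := v)) z = agents_at pos z"
      by (simp_all add: return_ports_update_other agents_at_move_other[where pos = pos, OF pos])
    then show ?thesis using le by simp
  qed
qed

definition unique_parent :: "'v set set \<Rightarrow> ('v \<times> 'v \<Rightarrow> marker) \<Rightarrow> bool" where
  "unique_parent E m \<longleftrightarrow>
     (\<forall>x y y'. {x, y} \<in> E \<longrightarrow> {x, y'} \<in> E \<longrightarrow> m (x, y) = Marker_F \<longrightarrow> m (x, y') = Marker_F \<longrightarrow> y = y')"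

lemma unique_parent_update:
  assumes uniq: "unique_parent E m" and uv: "u \<noteq> v" and X: "X \<noteq> Marker_F"
    and orphan: "Y = Marker_F \<Longrightarrow> \<forall>y. {v, y} \<in> E \<longrightarrow> m (v, y) \<noteq> Marker_F"
  shows "unique_parent E (m((u, v) := X, (v, u) := Y))"
  unfolding unique_parent_def
proof (intro allI impI)
  let ?m' = "m((u, v) := X, (v, u) := Y)"
  have F_cases: "(x, z) = (v, u) \<and> Y = Marker_F \<or> (x, z) \<noteq> (v, u) \<and> m (x, z) = Marker_F"
    if "?m' (x, z) = Marker_F" for x z
    using that uv X by (auto split: if_splits)
  fix x y y' assume "{x, y} \<in> E" "{x, y'} \<in> E" "?m' (x, y) = Marker_F" "?m' (x, y') = Marker_F"
  then show "y = y'"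
    using F_cases[of x y] F_cases[of x y'] orphan uniq unfolding unique_parent_def by blast
qed

section \<open>Unfinished nodes and the exploration forest\<close>

text \<open>(p, q) \<in> child_rel E m: q was discovered from p, and its F passage leads back to p.\<close>

definition child_rel :: "'v set set \<Rightarrow> ('v \<times> 'v \<Rightarrow> marker) \<Rightarrow> ('v \<times> 'v) set" where
  "child_rel E m = {(p, q). {p, q} \<in> E \<and> m (q, p) = Marker_F}"

lemma child_rel_update:
  assumes e: "{u, v} \<in> E" and X: "X \<noteq> Marker_F"
  shows "child_rel E (m((u, v) := X, (v, u) := Y)) =
         child_rel E m - {(u, v), (v, u)} \<union> (if Y = Marker_F then {(u, v)} else {})"
proof (rule set_eqI)
  fix pq :: "'a \<times> 'a"
  obtain p q where pq: "pq = (p, q)" by fastforce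
  let ?m' = "m((u, v) := X, (v, u) := Y)"
  consider "p = u" "q = v" | "p = v" "q = u" "u \<noteq> v" | "(q, p) \<noteq> (u, v)" "(q, p) \<noteq> (v, u)"
    by auto
  then show "pq \<in> child_rel E ?m' \<longleftrightarrow>
             pq \<in> child_rel E m - {(u, v), (v, u)} \<union> (if Y = Marker_F then {(u, v)} else {})"
  proof cases
    case 1
    then show ?thesis using e by (simp add: pq child_rel_def)
  next
    case 2
    then show ?thesis using X by (simp add: pq child_rel_def)
  next
    case 3
    then have "?m' (q, p) = m (q, p)" by (rule fun_upd2_other)
    moreover have "(p, q) \<notin> {(u, v), (v, u)}" using 3 by auto
    ultimately show ?thesis unfolding pq child_rel_def by auto
  qed
qed

lemma child_rel_rtrancl_parent:
  assumes "(x, y) \<in> (child_rel E m)\<^sup>*" "x \<noteq> y"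
  shows "\<exists>q. {y, q} \<in> E \<and> m (y, q) = Marker_F"
proof -
  obtain p where "(p, y) \<in> child_rel E m" using assms by (metis rtranclE)
  then show ?thesis unfolding child_rel_def by (auto simp: insert_commute)
qed

text \<open>Nodes that an agent will still leave: targets of B passages, to which an agent is bound
  to return, and nodes holding an agent that owes no return.\<close>

definition available_nodes :: "'v set set \<Rightarrow> ('v \<times> 'v \<Rightarrow> marker) \<Rightarrow> ('a::finite \<Rightarrow> 'v) \<Rightarrow> 'v set" where
  "available_nodes E m pos =
     {y. \<exists>z. {z, y} \<in> E \<and> m (z, y) = Marker_B} \<union> {z. card (return_ports E m z) < agents_at pos z}"

lemma available_nodes_keep:
  assumes avail: "z \<in> available_nodes E m pos"
    and incoming: "\<And>y. m (y, z) = Marker_B \<Longrightarrow> m' (y, z) = Marker_B"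
    and balance: "card (return_ports E m' z) + agents_at pos z \<le> card (return_ports E m z) + agents_at pos' z"
  shows "z \<in> available_nodes E m' pos'"
  using avail incoming balance unfolding available_nodes_def by fastforce

lemma available_nodes_update_other:
  assumes pos: "pos a = u" and zu: "z \<noteq> u" and zv: "z \<noteq> v" and z: "z \<in> available_nodes E m pos"
  shows "z \<in> available_nodes E (m((u, v) := X, (v, u) := Y)) (pos(a := v))"
proof (rule available_nodes_keep[OF z])
  show "(m((u, v) := X, (v, u) := Y)) (y, z) = Marker_B" if "m (y, z) = Marker_B" for y
    using that zu zv by simp
  have "return_ports E (m((u, v) := X, (v, u) := Y)) z = return_ports E m z"
    by (rule return_ports_update_other[OF zu zv])
  moreover have "agents_at (pos(a := v)) z = agents_at pos z"
    by (rule agents_at_move_other[where pos = pos, OF pos zu zv])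
  ultimately show "card (return_ports E (m((u, v) := X, (v, u) := Y)) z) + agents_at pos z
        \<le> card (return_ports E m z) + agents_at (pos(a := v)) z"
    by simp
qed

lemma available_nodes_target:
  assumes fin: "finite E" and pos: "pos a = u" and uv: "u \<noteq> v"
    and bounded: "returns_bounded E m pos"
    and ports: "return_ports E m' v \<subseteq> return_ports E m v"
  shows "v \<in> available_nodes E m' (pos(a := v))"
proof -
  have "card (return_ports E m' v) \<le> card (return_ports E m v)"
    using ports finite_return_ports[OF fin] by (rule card_mono[rotated])
  also have "\<dots> \<le> agents_at pos v" using bounded unfolding returns_bounded_def ..
  also have "\<dots> < agents_at (pos(a := v)) v" using agents_at_move(2)[where pos = pos, OF pos uv] by simp
  finally show ?thesis unfolding available_nodes_def by blast
qed

definition unfinished :: "'v set set \<Rightarrow> ('v \<times> 'v \<Rightarrow> marker) \<Rightarrow> 'v set \<Rightarrow> 'v \<Rightarrow> bool" where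
  "unfinished E m vis x \<longleftrightarrow>
     x \<in> vis \<and> (\<exists>y. {x, y} \<in> E \<and> (m (x, y) = Marker_Empty \<or> m (x, y) = Marker_F))"

definition unfinished_covered ::
  "'v set set \<Rightarrow> ('v \<times> 'v \<Rightarrow> marker) \<Rightarrow> 'v set \<Rightarrow> ('a::finite \<Rightarrow> 'v) \<Rightarrow> bool" where
  "unfinished_covered E m vis pos \<longleftrightarrow>
     (\<forall>x. unfinished E m vis x \<longrightarrow> (\<exists>y\<in>available_nodes E m pos. (x, y) \<in> (child_rel E m)\<^sup>*))"

lemma unfinished_update:
  assumes "unfinished E (m((u, v) := X, (v, u) := Y)) vis' x" "x \<in> vis"
    and "X \<noteq> Marker_Empty" "X \<noteq> Marker_F" "x = v \<Longrightarrow> Y \<noteq> Marker_Empty \<and> Y \<noteq> Marker_F"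
  shows "unfinished E m vis x"
proof -
  obtain y where xy: "{x, y} \<in> E"
    and m': "(m((u, v) := X, (v, u) := Y)) (x, y) \<in> {Marker_Empty, Marker_F}"
    using assms(1) unfolding unfinished_def by auto
  then have "(x, y) \<noteq> (u, v)" "(x, y) \<noteq> (v, u)" using assms(3-5) by (auto split: if_splits)
  then have "(m((u, v) := X, (v, u) := Y)) (x, y) = m (x, y)" by (rule fun_upd2_other)
  then have "m (x, y) \<in> {Marker_Empty, Marker_F}" using m' by simp
  then show ?thesis using xy assms(2) unfolding unfinished_def by auto
qed

lemma unfinished_coveredI:
  assumes "\<And>x. unfinished E m vis x \<Longrightarrow> \<exists>y\<in>available_nodes E m pos. (x, y) \<in> (child_rel E m)\<^sup>*"
  shows "unfinished_covered E m vis pos"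
  using assms unfolding unfinished_covered_def by blast

lemma unfinished_coveredD:
  assumes "unfinished_covered E m vis pos" "unfinished E m vis x"
  obtains y where "y \<in> available_nodes E m pos" "(x, y) \<in> (child_rel E m)\<^sup>*"
  using assms unfolding unfinished_covered_def by blast

lemma unfinished_covered_mono:
  assumes cov: "unfinished_covered E m vis pos"
    and unfinished: "\<And>x. unfinished E m' vis' x \<Longrightarrow> unfinished E m vis x"
    and child: "child_rel E m \<subseteq> child_rel E m'"
    and avail: "available_nodes E m pos \<subseteq> available_nodes E m' pos'"
  shows "unfinished_covered E m' vis' pos'"
proof (rule unfinished_coveredI)
  fix x assume "unfinished E m' vis' x"
  then obtain y where "y \<in> available_nodes E m pos" "(x, y) \<in> (child_rel E m)\<^sup>*"
    using unfinished by (blast elim: unfinished_coveredD[OF cov])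
  then show "\<exists>y\<in>available_nodes E m' pos'. (x, y) \<in> (child_rel E m')\<^sup>*"
    using avail rtrancl_mono[OF child] by blast
qed

lemma unfinished_covered_return:
  assumes fin: "finite E" and e: "{u, v} \<in> E" and uv: "u \<noteq> v" and pos: "pos a = u"
    and uvB: "m (u, v) = Marker_B" and vuE: "m (v, u) = Marker_E" and v: "v \<in> vis"
    and bounded: "returns_bounded E m pos" and cov: "unfinished_covered E m vis pos"
  shows "unfinished_covered E (m((u, v) := Marker_D, (v, u) := Marker_D)) (insert v vis) (pos(a := v))"
proof (rule unfinished_covered_mono[OF cov])
  let ?m' = "m((u, v) := Marker_D, (v, u) := Marker_D)"
  show "unfinished E m vis x" if x: "unfinished E ?m' (insert v vis) x" for x
  proof -
    have "x \<in> vis" using x v unfolding unfinished_def by auto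
    with x show ?thesis by (rule unfinished_update) simp_all
  qed
  have "(u, v) \<notin> child_rel E m" "(v, u) \<notin> child_rel E m"
    using uvB vuE by (simp_all add: child_rel_def)
  then show "child_rel E m \<subseteq> child_rel E ?m'" using child_rel_update[OF e] by auto
  show "available_nodes E m pos \<subseteq> available_nodes E ?m' (pos(a := v))"
  proof
    fix z assume z: "z \<in> available_nodes E m pos"
    consider "z = u" | "z = v" | "z \<noteq> u" "z \<noteq> v" by blast
    then show "z \<in> available_nodes E ?m' (pos(a := v))"
    proof cases
      case 1
      have "v \<in> return_ports E m u" using e uvB unfolding return_ports_def by simp
      then have "card (return_ports E ?m' u) + 1 = card (return_ports E m u)"
        using return_ports_update_source[OF uv] card_Suc_Diff1[OF finite_return_ports[OF fin]] by simp
      then have balance: "card (return_ports E ?m' u) + agents_at pos u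
          \<le> card (return_ports E m u) + agents_at (pos(a := v)) u"
        using agents_at_move(1)[where pos = pos, OF pos uv] by linarith
      have incoming: "?m' (y, u) = Marker_B" if "m (y, u) = Marker_B" for y
        using that vuE uv by auto
      show ?thesis using available_nodes_keep[OF z[unfolded 1] incoming balance] 1 by simp
    next
      case 2
      have "return_ports E ?m' v \<subseteq> return_ports E m v"
        using return_ports_update_target[OF uv] by auto
      then show ?thesis unfolding 2 by (rule available_nodes_target[OF fin pos uv bounded])
    next
      case 3
      then show ?thesis using available_nodes_update_other[OF pos _ _ z] by blast
    qed
  qed
qed

lemma unfinished_covered_revisit:
  assumes fin: "finite E" and e: "{u, v} \<in> E" and uv: "u \<noteq> v" and pos: "pos a = u"
    and uv0: "m (u, v) = Marker_Empty" and vu0: "m (v, u) = Marker_Empty" and v: "v \<in> vis"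
    and cov: "unfinished_covered E m vis pos"
  shows "unfinished_covered E (m((u, v) := Marker_E, (v, u) := Marker_B)) (insert v vis) (pos(a := v))"
proof (rule unfinished_covered_mono[OF cov])
  let ?m' = "m((u, v) := Marker_E, (v, u) := Marker_B)"
  show "unfinished E m vis x" if x: "unfinished E ?m' (insert v vis) x" for x
  proof -
    have "x \<in> vis" using x v unfolding unfinished_def by auto
    with x show ?thesis by (rule unfinished_update) simp_all
  qed
  have "(u, v) \<notin> child_rel E m" "(v, u) \<notin> child_rel E m"
    using uv0 vu0 by (simp_all add: child_rel_def)
  then show "child_rel E m \<subseteq> child_rel E ?m'" using child_rel_update[OF e] by auto
  show "available_nodes E m pos \<subseteq> available_nodes E ?m' (pos(a := v))"
  proof
    fix z assume z: "z \<in> available_nodes E m pos"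
    consider "z = u" | "z = v" | "z \<noteq> u" "z \<noteq> v" by blast
    then show "z \<in> available_nodes E ?m' (pos(a := v))"
    proof cases
      case 1
      have "{v, u} \<in> E" using e by (simp add: insert_commute)
      moreover have "?m' (v, u) = Marker_B" by simp
      ultimately show ?thesis unfolding 1 available_nodes_def by blast
    next
      case 2
      have "{v, u} \<in> E" "u \<notin> return_ports E m v"
        using e vu0 unfolding return_ports_def by (auto simp: insert_commute)
      then have "card (return_ports E ?m' v) = card (return_ports E m v) + 1"
        using return_ports_update_target[OF uv] finite_return_ports[OF fin] by simp
      then have balance: "card (return_ports E ?m' v) + agents_at pos v
          \<le> card (return_ports E m v) + agents_at (pos(a := v)) v"
        using agents_at_move(2)[where pos = pos, OF pos uv] by linarith
      have incoming: "?m' (y, v) = Marker_B" if "m (y, v) = Marker_B" for y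
        using that uv0 uv by auto
      show ?thesis using available_nodes_keep[OF z[unfolded 2] incoming balance] 2 by simp
    next
      case 3
      then show ?thesis using available_nodes_update_other[OF pos _ _ z] by blast
    qed
  qed
qed

lemma unfinished_covered_discover:
  assumes fin: "finite E" and e: "{u, v} \<in> E" and uv: "u \<noteq> v" and pos: "pos a = u"
    and uv0: "m (u, v) = Marker_Empty" and v: "v \<notin> vis"
    and bounded: "returns_bounded E m pos" and avail_vis: "available_nodes E m pos \<subseteq> vis"
    and cov: "unfinished_covered E m vis pos"
  shows "unfinished_covered E (m((u, v) := Marker_E, (v, u) := Marker_F)) (insert v vis) (pos(a := v))"
proof (rule unfinished_coveredI)
  let ?m' = "m((u, v) := Marker_E, (v, u) := Marker_F)"
  have "return_ports E ?m' v \<subseteq> return_ports E m v"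
    using return_ports_update_target[OF uv] by auto
  then have v_avail: "v \<in> available_nodes E ?m' (pos(a := v))"
    by (rule available_nodes_target[OF fin pos uv bounded])
  have "(v, u) \<notin> child_rel E m" using uv0 by (simp add: child_rel_def)
  then have child: "child_rel E ?m' = insert (u, v) (child_rel E m)"
    using child_rel_update[OF e] by auto
  fix x assume x: "unfinished E ?m' (insert v vis) x"
  show "\<exists>y\<in>available_nodes E ?m' (pos(a := v)). (x, y) \<in> (child_rel E ?m')\<^sup>*"
  proof (cases "x = v")
    case True
    then show ?thesis using v_avail by blast
  next
    case False
    then have "x \<in> vis" using x unfolding unfinished_def by auto
    with x have "unfinished E m vis x" by (rule unfinished_update) (use False in simp_all)
    then obtain y where y: "y \<in> available_nodes E m pos" and path: "(x, y) \<in> (child_rel E m)\<^sup>*"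
      by (rule unfinished_coveredD[OF cov])
    have path': "(x, y) \<in> (child_rel E ?m')\<^sup>*"
      using path rtrancl_mono[of "child_rel E m" "child_rel E ?m'"] child by auto
    show ?thesis
    proof (cases "y = u")
      case True
      have "(u, v) \<in> child_rel E ?m'" using child by simp
      then have "(x, v) \<in> (child_rel E ?m')\<^sup>*" using path' True by (simp add: rtrancl_into_rtrancl)
      then show ?thesis using v_avail by blast
    next
      case False
      have "y \<noteq> v" using y avail_vis v by blast
      then have "y \<in> available_nodes E ?m' (pos(a := v))"
        using available_nodes_update_other[OF pos False _ y] by blast
      then show ?thesis using path' by blast
    qed
  qed
qed

lemma unfinished_covered_close:
  assumes fin: "finite E" and e: "{u, v} \<in> E" and uv: "u \<noteq> v" and pos: "pos a = u"
    and v: "v \<in> vis" and bounded: "returns_bounded E m pos" and cov: "unfinished_covered E m vis pos"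
    and closed: "\<And>y. {u, y} \<in> E \<Longrightarrow> y \<noteq> v \<Longrightarrow> m (u, y) \<noteq> Marker_Empty \<and> m (u, y) \<noteq> Marker_F"
  shows "unfinished_covered E (m((u, v) := Marker_D, (v, u) := Marker_D)) (insert v vis) (pos(a := v))"
proof (rule unfinished_coveredI)
  let ?m' = "m((u, v) := Marker_D, (v, u) := Marker_D)"
  let ?S = "{(u, v), (v, u)}"
  have child: "child_rel E ?m' = child_rel E m - ?S" using child_rel_update[OF e] by simp
  have u_closed: "?m' (u, y) \<noteq> Marker_Empty \<and> ?m' (u, y) \<noteq> Marker_F" if "{u, y} \<in> E" for y
    using closed[OF that] uv by (cases "y = v") auto
  have no_path_to_u: "t = u" if "(t, u) \<in> (child_rel E ?m')\<^sup>*" for t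
    using child_rel_rtrancl_parent[OF that] u_closed by blast
  have "return_ports E ?m' v \<subseteq> return_ports E m v"
    using return_ports_update_target[OF uv] by auto
  then have v_avail: "v \<in> available_nodes E ?m' (pos(a := v))"
    by (rule available_nodes_target[OF fin pos uv bounded])
  fix x assume x: "unfinished E ?m' (insert v vis) x"
  have "x \<noteq> u" using x u_closed unfolding unfinished_def by blast
  have "x \<in> vis" using x v unfolding unfinished_def by auto
  with x have "unfinished E m vis x" by (rule unfinished_update) simp_all
  then obtain y where y: "y \<in> available_nodes E m pos" and path: "(x, y) \<in> (child_rel E m)\<^sup>*"
    by (rule unfinished_coveredD[OF cov])
  consider "(x, y) \<in> (child_rel E ?m')\<^sup>*" | "(x, u) \<in> (child_rel E ?m')\<^sup>*" | "(x, v) \<in> (child_rel E ?m')\<^sup>*"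
    using rtrancl_Diff_cases[OF path, of ?S] child by auto
  then show "\<exists>y\<in>available_nodes E ?m' (pos(a := v)). (x, y) \<in> (child_rel E ?m')\<^sup>*"
  proof cases
    case 1
    then have "y \<noteq> u" using no_path_to_u \<open>x \<noteq> u\<close> by blast
    then show ?thesis
      using 1 v_avail available_nodes_update_other[OF pos _ _ y] by (cases "y = v") auto
  next
    case 2
    then show ?thesis using no_path_to_u \<open>x \<noteq> u\<close> by blast
  next
    case 3
    then show ?thesis using v_avail by blast
  qed
qed

section \<open>Invariance under moves\<close>

definition explo_inv :: "'v set set \<Rightarrow> ('v set \<Rightarrow> real) \<Rightarrow> 'v \<Rightarrow> 'v cfg \<Rightarrow> bool" where
  "explo_inv E w s c \<longleftrightarrow>
     markers_consistent E (cfg_markers c) \<and>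
     (\<forall>x y. {x, y} \<in> E \<longrightarrow> cfg_markers c (x, y) \<noteq> Marker_Empty \<longrightarrow>
        x \<in> cfg_visited c \<and> y \<in> cfg_visited c \<and> {x, y} \<in> cfg_trav c) \<and>
     range (cfg_pos c) \<subseteq> cfg_visited c \<and> s \<in> cfg_visited c \<and>
     returns_bounded E (cfg_markers c) (cfg_pos c) \<and>
     unique_parent E (cfg_markers c) \<and>
     unfinished_covered E (cfg_markers c) (cfg_visited c) (cfg_pos c) \<and>
     cfg_cost c = potential E w (cfg_markers c)"

lemma explo_invD:
  assumes "explo_inv E w s c"
  shows "{x, y} \<in> E \<Longrightarrow> compatible_markers (cfg_markers c (x, y)) (cfg_markers c (y, x))"
    and "{x, y} \<in> E \<Longrightarrow> cfg_markers c (x, y) \<noteq> Marker_Empty \<Longrightarrow>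
           x \<in> cfg_visited c \<and> y \<in> cfg_visited c \<and> {x, y} \<in> cfg_trav c"
    and "cfg_pos c a \<in> cfg_visited c"
    and "s \<in> cfg_visited c"
    and "returns_bounded E (cfg_markers c) (cfg_pos c)"
    and "unique_parent E (cfg_markers c)"
    and "unfinished_covered E (cfg_markers c) (cfg_visited c) (cfg_pos c)"
    and "cfg_cost c = potential E w (cfg_markers c)"
  using assms unfolding explo_inv_def markers_consistent_def by auto

lemma explo_inv_available_visited:
  assumes I: "explo_inv E w s c"
  shows "available_nodes E (cfg_markers c) (cfg_pos c) \<subseteq> cfg_visited c"
proof
  fix y assume "y \<in> available_nodes E (cfg_markers c) (cfg_pos c)"
  then have "(\<exists>z. {z, y} \<in> E \<and> cfg_markers c (z, y) = Marker_B) \<or>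
             card (return_ports E (cfg_markers c) y) < agents_at (cfg_pos c) y"
    unfolding available_nodes_def by simp
  then show "y \<in> cfg_visited c"
  proof
    assume "\<exists>z. {z, y} \<in> E \<and> cfg_markers c (z, y) = Marker_B"
    then obtain z where "{z, y} \<in> E" "cfg_markers c (z, y) = Marker_B" by blast
    then show ?thesis using explo_invD(2)[OF I] by simp
  next
    assume "card (return_ports E (cfg_markers c) y) < agents_at (cfg_pos c) y"
    then obtain b where "cfg_pos c b = y" using agents_at_eq_0_iff[of "cfg_pos c" y] by auto
    then show ?thesis using explo_invD(3)[OF I, of b] by simp
  qed
qed

lemma explo_inv_traverse:
  assumes G: "simple_graph V E" and I: "explo_inv E w s c"
    and pos: "cfg_pos c a = u" and e: "{u, v} \<in> E"
    and XY: "compatible_markers X Y" and X: "X \<noteq> Marker_B" "X \<noteq> Marker_F"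
    and weight: "marker_weight X + marker_weight Y =
      marker_weight (cfg_markers c (u, v)) + marker_weight (cfg_markers c (v, u)) + 1"
    and ports: "return_ports E (cfg_markers c) u = {} \<or> v \<in> return_ports E (cfg_markers c) u"
    and orphan: "Y = Marker_F \<Longrightarrow> \<forall>y. {v, y} \<in> E \<longrightarrow> cfg_markers c (v, y) \<noteq> Marker_F"
    and cov: "unfinished_covered E ((cfg_markers c)((u, v) := X, (v, u) := Y))
                (insert v (cfg_visited c)) ((cfg_pos c)(a := v))"
  shows "explo_inv E w s (traverse w c a u v ((cfg_markers c)((u, v) := X, (v, u) := Y)))"
proof -
  let ?m = "cfg_markers c"
  let ?m' = "?m((u, v) := X, (v, u) := Y)"
  have uv: "u \<noteq> v" using simple_graph_edgeD[OF G e] by blast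
  have marks: "\<forall>x y. {x, y} \<in> E \<longrightarrow> ?m' (x, y) \<noteq> Marker_Empty \<longrightarrow>
      x \<in> insert v (cfg_visited c) \<and> y \<in> insert v (cfg_visited c) \<and> {x, y} \<in> insert {u, v} (cfg_trav c)"
  proof (intro allI impI)
    fix x y assume xy: "{x, y} \<in> E" "?m' (x, y) \<noteq> Marker_Empty"
    show "x \<in> insert v (cfg_visited c) \<and> y \<in> insert v (cfg_visited c) \<and> {x, y} \<in> insert {u, v} (cfg_trav c)"
    proof (cases "(x, y) \<in> {(u, v), (v, u)}")
      case True
      then show ?thesis using explo_invD(3)[OF I, of a] pos by (auto simp: insert_commute)
    next
      case False
      then have "?m' (x, y) = ?m (x, y)" by (intro fun_upd2_other) auto
      then show ?thesis using explo_invD(2)[OF I xy(1)] xy(2) by simp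
    qed
  qed
  have "range ((cfg_pos c)(a := v)) \<subseteq> insert v (cfg_visited c)"
    using explo_invD(3)[OF I] by auto
  moreover have "markers_consistent E ?m'"
    using markers_consistent_update[OF _ XY uv] explo_invD(1)[OF I]
    unfolding markers_consistent_def by blast
  moreover have "returns_bounded E ?m' ((cfg_pos c)(a := v))"
    by (rule returns_bounded_move[OF simple_graph_finite_edges[OF G] uv pos X(1) ports explo_invD(5)[OF I]])
  moreover have "unique_parent E ?m'"
    by (rule unique_parent_update[OF explo_invD(6)[OF I] uv X(2) orphan])
  moreover have "cfg_cost c + w {u, v} = potential E w ?m'"
    using potential_update[OF G e, of w ?m X Y] explo_invD(8)[OF I] by (simp add: weight)
  ultimately show ?thesis
    using marks cov explo_invD(4)[OF I] unfolding explo_inv_def traverse_sel by blast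
qed

lemma explo_inv_return:
  assumes G: "simple_graph V E" and I: "explo_inv E w s c"
    and pos: "cfg_pos c a = u" and e: "{u, v} \<in> E" and uvB: "cfg_markers c (u, v) = Marker_B"
  shows "explo_inv E w s (traverse w c a u v ((cfg_markers c)((u, v) := Marker_D, (v, u) := Marker_D)))"
proof -
  let ?m = "cfg_markers c"
  have uv: "u \<noteq> v" using simple_graph_edgeD[OF G e] by blast
  have vuE: "?m (v, u) = Marker_E" using explo_invD(1)[OF I e] uvB by (simp add: compatible_markers_def)
  have v: "v \<in> cfg_visited c" using explo_invD(2)[OF I e] uvB by simp
  have "v \<in> return_ports E ?m u" using e uvB by (simp add: return_ports_def)
  moreover have "unfinished_covered E (?m((u, v) := Marker_D, (v, u) := Marker_D))
      (insert v (cfg_visited c)) ((cfg_pos c)(a := v))"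
    by (rule unfinished_covered_return[OF simple_graph_finite_edges[OF G] e uv pos uvB vuE v
          explo_invD(5,7)[OF I]])
  ultimately show ?thesis
    using uvB vuE
    by (intro explo_inv_traverse[OF G I pos e]) (simp_all add: compatible_markers_def marker_weight_def)
qed

lemma explo_inv_explore:
  assumes G: "simple_graph V E" and I: "explo_inv E w s c"
    and pos: "cfg_pos c a = u" and e: "{u, v} \<in> E"
    and nB: "\<not> has_marker E c u Marker_B" and uv0: "cfg_markers c (u, v) = Marker_Empty"
  shows "explo_inv E w s (traverse w c a u v ((cfg_markers c)((u, v) := Marker_E,
           (v, u) := (if v \<in> cfg_visited c then Marker_B else Marker_F))))"
proof -
  let ?m = "cfg_markers c"
  have fin: "finite E" using simple_graph_finite_edges[OF G] .
  have uv: "u \<noteq> v" using simple_graph_edgeD[OF G e] by blast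
  have vu0: "?m (v, u) = Marker_Empty" using explo_invD(1)[OF I e] uv0 by (simp add: compatible_markers_def)
  have ports: "return_ports E ?m u = {}" using nB unfolding has_marker_def return_ports_def by auto
  show ?thesis
  proof (cases "v \<in> cfg_visited c")
    case True
    have "unfinished_covered E (?m((u, v) := Marker_E, (v, u) := Marker_B))
        (insert v (cfg_visited c)) ((cfg_pos c)(a := v))"
      by (rule unfinished_covered_revisit[OF fin e uv pos uv0 vu0 True explo_invD(7)[OF I]])
    then have "explo_inv E w s (traverse w c a u v (?m((u, v) := Marker_E, (v, u) := Marker_B)))"
      using ports uv0 vu0
      by (intro explo_inv_traverse[OF G I pos e]) (simp_all add: compatible_markers_def marker_weight_def)
    then show ?thesis using True by simp
  next
    case False
    have orphan: "\<forall>y. {v, y} \<in> E \<longrightarrow> ?m (v, y) \<noteq> Marker_F"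
    proof (intro allI impI)
      fix y assume "{v, y} \<in> E"
      then have "?m (v, y) = Marker_Empty" using explo_invD(2)[OF I] False by blast
      then show "?m (v, y) \<noteq> Marker_F" by simp
    qed
    have "unfinished_covered E (?m((u, v) := Marker_E, (v, u) := Marker_F))
        (insert v (cfg_visited c)) ((cfg_pos c)(a := v))"
      by (rule unfinished_covered_discover[OF fin e uv pos uv0 False explo_invD(5)[OF I]
            explo_inv_available_visited[OF I] explo_invD(7)[OF I]])
    then have "explo_inv E w s (traverse w c a u v (?m((u, v) := Marker_E, (v, u) := Marker_F)))"
      using ports uv0 vu0 orphan
      by (intro explo_inv_traverse[OF G I pos e]) (simp_all add: compatible_markers_def marker_weight_def)
    then show ?thesis using False by simp
  qed
qed

lemma explo_inv_close:
  assumes G: "simple_graph V E" and I: "explo_inv E w s c"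
    and pos: "cfg_pos c a = u" and e: "{u, v} \<in> E"
    and uv_mark: "cfg_markers c (u, v) = Marker_F \<or> cfg_markers c (u, v) = Marker_E"
    and nB: "\<not> has_marker E c u Marker_B"
    and closed: "\<And>y. {u, y} \<in> E \<Longrightarrow> y \<noteq> v \<Longrightarrow>
                   cfg_markers c (u, y) \<noteq> Marker_Empty \<and> cfg_markers c (u, y) \<noteq> Marker_F"
  shows "explo_inv E w s (traverse w c a u v ((cfg_markers c)((u, v) := Marker_D, (v, u) := Marker_D)))"
proof -
  let ?m = "cfg_markers c"
  have uv: "u \<noteq> v" using simple_graph_edgeD[OF G e] by blast
  have weight: "marker_weight (?m (u, v)) + marker_weight (?m (v, u)) = 1"
    using uv_mark explo_invD(1)[OF I e] by (auto simp: compatible_markers_def marker_weight_def)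
  have v: "v \<in> cfg_visited c" using explo_invD(2)[OF I e] uv_mark by auto
  have ports: "return_ports E ?m u = {}" using nB unfolding has_marker_def return_ports_def by auto
  have "unfinished_covered E (?m((u, v) := Marker_D, (v, u) := Marker_D))
      (insert v (cfg_visited c)) ((cfg_pos c)(a := v))"
    by (rule unfinished_covered_close[OF simple_graph_finite_edges[OF G] e uv pos v
          explo_invD(5,7)[OF I] closed])
  then show ?thesis
    using ports weight
    by (intro explo_inv_traverse[OF G I pos e]) (simp_all add: compatible_markers_def marker_weight_def)
qed

lemma explo_inv_step:
  assumes G: "simple_graph V E" and I: "explo_inv E w s c" and step: "explo_step E w a c c'"
  shows "explo_inv E w s c'"
  using step
proof cases
  case (row1 u v)
  then show ?thesis using explo_inv_return[OF G I, of a u v] by simp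
next
  case (row234 u v mk1 arr)
  txt \<open>An unmarked passage always faces an unmarked one, so row 2 never applies.\<close>
  have "u \<noteq> v" using simple_graph_edgeD[OF G row234(4)] by blast
  moreover have "cfg_markers c (v, u) = Marker_Empty"
    using explo_invD(1)[OF I row234(4)] row234(5) by (simp add: compatible_markers_def)
  ultimately have "mk1((v, u) := arr) = (cfg_markers c)((u, v) := Marker_E,
      (v, u) := (if v \<in> cfg_visited c then Marker_B else Marker_F))"
    using row234(6,7) by simp
  then show ?thesis using explo_inv_explore[OF G I, of a u v] row234 by simp
next
  case (row5 u v)
  have "cfg_markers c (u, y) \<noteq> Marker_Empty \<and> cfg_markers c (u, y) \<noteq> Marker_F"
    if "{u, y} \<in> E" "y \<noteq> v" for y
    using that row5 explo_invD(6)[OF I] unfolding has_marker_def unique_parent_def by blast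
  then show ?thesis using explo_inv_close[OF G I, of a u v] row5 by simp
next
  case (row6 u v)
  have "cfg_markers c (u, y) \<noteq> Marker_Empty \<and> cfg_markers c (u, y) \<noteq> Marker_F"
    if "{u, y} \<in> E" for y
    using that row6 unfolding has_marker_def by blast
  then show ?thesis using explo_inv_close[OF G I, of a u v] row6 by simp
qed

lemma explo_inv_init: "explo_inv E w s (init_cfg s)"
proof -
  have ports: "return_ports E (\<lambda>_. Marker_Empty) z = {}" for z
    by (simp add: return_ports_def)
  have "s \<in> available_nodes E (\<lambda>_. Marker_Empty) (\<lambda>_::bool. s)"
    by (simp add: available_nodes_def agents_at_def ports)
  then have "unfinished_covered E (\<lambda>_. Marker_Empty) {s} (\<lambda>_::bool. s)"
    by (intro unfinished_coveredI) (auto simp: unfinished_def)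
  then show ?thesis
    unfolding explo_inv_def init_cfg_def
    by (simp add: markers_consistent_def compatible_markers_def returns_bounded_def ports
        unique_parent_def potential_def marker_weight_def)
qed

lemma explo_inv_reachable:
  assumes G: "simple_graph V E" and reach: "(async_step E w)\<^sup>*\<^sup>* (init_cfg s) c"
  shows "explo_inv E w s c"
  using reach
proof (induction rule: rtranclp_induct)
  case base
  show ?case by (rule explo_inv_init)
next
  case (step c c')
  then obtain a where "explo_step E w a c c'" unfolding async_step_def by blast
  then show ?case by (rule explo_inv_step[OF G step.IH])
qed

section \<open>Terminal configurations\<close>

lemma stuck_agent_sees_D:
  assumes stuck: "\<nexists>c'. explo_step E w a c c'" and e: "{cfg_pos c a, y} \<in> E"
  shows "cfg_markers c (cfg_pos c a, y) = Marker_D"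
proof (rule ccontr)
  let ?u = "cfg_pos c a"
  assume "cfg_markers c (?u, y) \<noteq> Marker_D"
  then have some: "has_marker E c ?u Marker_B \<or> has_marker E c ?u Marker_Empty \<or>
                   has_marker E c ?u Marker_F \<or> has_marker E c ?u Marker_E"
    using e unfolding has_marker_def by (cases "cfg_markers c (?u, y)") auto
  have nB: "\<not> has_marker E c ?u Marker_B"
  proof
    assume "has_marker E c ?u Marker_B"
    then obtain v where v: "{?u, v} \<in> E" "cfg_markers c (?u, v) = Marker_B" unfolding has_marker_def by blast
    show False using explo_step.row1[OF refl v] stuck by blast
  qed
  have n0: "\<not> has_marker E c ?u Marker_Empty"
  proof
    assume "has_marker E c ?u Marker_Empty"
    then obtain v where v: "{?u, v} \<in> E" "cfg_markers c (?u, v) = Marker_Empty" unfolding has_marker_def by blast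
    show False using explo_step.row234[OF refl nB v refl refl] stuck by blast
  qed
  have nF: "\<not> has_marker E c ?u Marker_F"
  proof
    assume "has_marker E c ?u Marker_F"
    then obtain v where v: "{?u, v} \<in> E" "cfg_markers c (?u, v) = Marker_F" unfolding has_marker_def by blast
    show False using explo_step.row5[OF refl nB n0 v] stuck by blast
  qed
  have nE: "\<not> has_marker E c ?u Marker_E"
  proof
    assume "has_marker E c ?u Marker_E"
    then obtain v where v: "{?u, v} \<in> E" "cfg_markers c (?u, v) = Marker_E" unfolding has_marker_def by blast
    show False using explo_step.row6[OF refl nB n0 nF v] stuck by blast
  qed
  show False using some nB n0 nF nE by blast
qed

lemma stuck_no_B:
  assumes G: "simple_graph V E" and I: "explo_inv E w s c"
    and stuck: "\<nexists>c'. async_step E w c c'" and e: "{z, y} \<in> E"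
  shows "cfg_markers c (z, y) \<noteq> Marker_B"
proof
  assume B: "cfg_markers c (z, y) = Marker_B"
  then have "y \<in> return_ports E (cfg_markers c) z" using e by (simp add: return_ports_def)
  then have "card (return_ports E (cfg_markers c) z) \<noteq> 0"
    using finite_return_ports[OF simple_graph_finite_edges[OF G]] by auto
  moreover have "card (return_ports E (cfg_markers c) z) \<le> agents_at (cfg_pos c) z"
    using explo_invD(5)[OF I] unfolding returns_bounded_def ..
  ultimately have "agents_at (cfg_pos c) z \<noteq> 0" by linarith
  then obtain a where a: "cfg_pos c a = z" using agents_at_eq_0_iff[of "cfg_pos c" z] by auto
  have "\<nexists>c'. explo_step E w a c c'" using stuck unfolding async_step_def by blast
  moreover have "{cfg_pos c a, y} \<in> E" using e a by simp
  ultimately have "cfg_markers c (cfg_pos c a, y) = Marker_D" by (rule stuck_agent_sees_D)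
  then show False using a B by simp
qed

lemma stuck_not_unfinished:
  assumes G: "simple_graph V E" and I: "explo_inv E w s c" and stuck: "\<nexists>c'. async_step E w c c'"
  shows "\<not> unfinished E (cfg_markers c) (cfg_visited c) x"
proof
  let ?m = "cfg_markers c"
  assume x: "unfinished E ?m (cfg_visited c) x"
  have agent_D: "?m (cfg_pos c a, q) = Marker_D" if "{cfg_pos c a, q} \<in> E" for a q
    using stuck_agent_sees_D[OF _ that] stuck unfolding async_step_def by blast
  obtain y where y: "y \<in> available_nodes E ?m (cfg_pos c)" and path: "(x, y) \<in> (child_rel E ?m)\<^sup>*"
    using explo_invD(7)[OF I] x by (rule unfinished_coveredD)
  have "\<not> (\<exists>z. {z, y} \<in> E \<and> ?m (z, y) = Marker_B)" using stuck_no_B[OF G I stuck] by blast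
  then have "agents_at (cfg_pos c) y \<noteq> 0" using y unfolding available_nodes_def by auto
  then obtain a where a: "cfg_pos c a = y" using agents_at_eq_0_iff[of "cfg_pos c" y] by auto
  show False
  proof (cases "x = y")
    case True
    then obtain q where "{y, q} \<in> E" "?m (y, q) \<noteq> Marker_D" using x unfolding unfinished_def by auto
    then show False using agent_D[of a q] a by simp
  next
    case False
    then obtain q where "{y, q} \<in> E" "?m (y, q) = Marker_F" using child_rel_rtrancl_parent[OF path] by blast
    then show False using agent_D[of a q] a by simp
  qed
qed

lemma stuck_visited_all_D:
  assumes G: "simple_graph V E" and I: "explo_inv E w s c" and stuck: "\<nexists>c'. async_step E w c c'"
    and x: "x \<in> cfg_visited c" and e: "{x, y} \<in> E"
  shows "cfg_markers c (x, y) = Marker_D"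
proof -
  let ?m = "cfg_markers c"
  have closed: "?m (x', y') \<noteq> Marker_Empty \<and> ?m (x', y') \<noteq> Marker_F"
    if "x' \<in> cfg_visited c" "{x', y'} \<in> E" for x' y'
    using stuck_not_unfinished[OF G I stuck, of x'] that unfolding unfinished_def by blast
  have "?m (x, y) \<noteq> Marker_E"
  proof
    assume E: "?m (x, y) = Marker_E"
    then have "?m (y, x) = Marker_B \<or> ?m (y, x) = Marker_F"
      using explo_invD(1)[OF I e] by (simp add: compatible_markers_def)
    moreover have "{y, x} \<in> E" using e by (simp add: insert_commute)
    moreover have "y \<in> cfg_visited c" using explo_invD(2)[OF I e] E by simp
    ultimately show False using closed stuck_no_B[OF G I stuck] by blast
  qed
  then show ?thesis using closed[OF x e] stuck_no_B[OF G I stuck e] by (cases "?m (x, y)") auto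
qed

lemma stuck_explored:
  assumes G: "simple_graph V E" and C: "connected_graph V E" and s: "s \<in> V"
    and I: "explo_inv E w s c" and stuck: "\<nexists>c'. async_step E w c c'"
  shows "E \<subseteq> cfg_trav c"
proof
  have visited: "v \<in> cfg_visited c" if "v \<in> V" for v
  proof -
    have "(s, v) \<in> (adj E)\<^sup>*" using C s that unfolding connected_graph_def by blast
    then show ?thesis
    proof (induction rule: rtrancl_induct)
      case base
      show ?case by (rule explo_invD(4)[OF I])
    next
      case (step y z)
      then have yz: "{y, z} \<in> E" unfolding adj_def by simp
      then have "cfg_markers c (y, z) = Marker_D" by (rule stuck_visited_all_D[OF G I stuck step.IH])
      then show ?case using explo_invD(2)[OF I yz] by simp
    qed
  qed
  fix e assume "e \<in> E"
  then obtain x y where e: "e = {x, y}" "x \<in> V" using G unfolding simple_graph_def by blast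
  then have "cfg_markers c (x, y) = Marker_D"
    using stuck_visited_all_D[OF G I stuck visited] \<open>e \<in> E\<close> by simp
  then show "e \<in> cfg_trav c" using explo_invD(2)[OF I] e \<open>e \<in> E\<close> by simp
qed

theorem proposition19:
  fixes V :: "'v set" and E :: "'v set set" and w :: "'v set \<Rightarrow> real" and s :: 'v
  assumes "simple_graph V E" and "connected_graph V E" and "s \<in> V"
    and "\<forall>e\<in>E. w e > 0"
  shows "\<forall>c. (async_step E w)\<^sup>*\<^sup>* (init_cfg s) c \<longrightarrow>
            cfg_cost c \<le> 2 * (\<Sum>e\<in>E. w e) \<and>
            ((\<nexists>c'. async_step E w c c') \<longrightarrow> E \<subseteq> cfg_trav c)"
proof (intro allI impI)
  fix c assume "(async_step E w)\<^sup>*\<^sup>* (init_cfg s) c"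
  then have I: "explo_inv E w s c" by (rule explo_inv_reachable[OF assms(1)])
  have "cfg_cost c = potential E w (cfg_markers c)" by (rule explo_invD(8)[OF I])
  also have "\<dots> \<le> 2 * (\<Sum>e\<in>E. w e)" using potential_le[OF assms(1)] assms(4) by (simp add: less_imp_le)
  finally show "cfg_cost c \<le> 2 * (\<Sum>e\<in>E. w e) \<and> ((\<nexists>c'. async_step E w c c') \<longrightarrow> E \<subseteq> cfg_trav c)"
    using stuck_explored[OF assms(1-3) I] by blast
qed

end
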